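(* For every integer $k\ge1$, \[ \sum_{n=1}^\infty\frac{Q_{k+1}(H_n,H_n^{(2)},\dots,H_n^{(k+1)})}{(n+1)^2}+\sum_{n=1}^\infty\frac{Q_k(H_n,H_n^{(2)},\dots,H_n^{(k)})}{n^3}=(k+2)\zeta(k+3). \]
   Context: $H_n^{(r)}=\sum_{t=1}^n t^{-r}$, $H_n=H_n^{(1)}$. For $n\ge1$, $Q_n(y_1,\dots,y_n)=\sum_{m_1+2m_2+\cdots=n}\frac{1}{m_1!m_2!\cdots}\prod_{i\ge1}(y_i/i)^{m_i}$ (sum over tuples of nonnegative integers), i.e. $Q_n(p_1,\dots,p_n)=h_n$, the complete symmetric function. $\zeta$ is the Riemann zeta function. *)

theory Defs
  imports Complex_Main
begin

definition harm :: "nat \<Rightarrow> nat \<Rightarrow> real" where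
  "harm r n = (\<Sum>t=1..n. 1 / (real t) ^ r)"

definition Qidx :: "nat \<Rightarrow> (nat \<Rightarrow> nat) set" where
  "Qidx n = {m. (\<forall>i. m i \<noteq> 0 \<longrightarrow> i \<in> {1..n}) \<and> (\<Sum>i=1..n. i * m i) = n}"

definition Q :: "nat \<Rightarrow> (nat \<Rightarrow> real) \<Rightarrow> real" where
  "Q n y = (\<Sum>m\<in>Qidx n. \<Prod>i=1..n. (y i / real i) ^ (m i) / fact (m i))"

definition zeta_real :: "nat \<Rightarrow> real" where
  "zeta_real s = (\<Sum>n. 1 / (real (Suc n)) ^ s)"

end

theory Submission
  imports Defs "HOL-Analysis.Summation_Tests"
begin

text \<open>
  Let c_k(a, n) be the coefficient of x^k in prod_{t=1..n} t / (t + a - x). At a = 0 the product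
  is exp (sum_r H_n^(r) x^r / r), so c_k(0, n) = Q_k(H_n, ..., H_n^(k)). The recurrence
  (n+1) c_{k+1}(0, n+1) = (n+1) c_{k+1}(0, n) + c_k(0, n+1) splits each term of the first series,
  and the two series of the theorem add up to sum_n c_{k+1}(0, n) / n^2. So it suffices to show
  sum_n c_k(0, n) / n^2 = (k+1) zeta(k+2).

  Put b = a + 1 and let e_k(b, n), f_k(b, n) be the coefficients of the product divided by b - x
  and by (b - x)^2. The identity prod t / (t + a - x) = prod t / (t + b - x) * (n + b - x) / (b - x)
  gives c_k(a, n) = c_k(b, n) + n e_k(b, n), and e_k(b, n) / n = f_k(b, n-1) - f_k(b, n). Hence
  raising the parameter from a to b lowers the partial sum sum_{n<=N} c_k(a, n) / n^2 by
  f_k(b, 0) - f_k(b, N) = (k+1) / b^(k+2) - f_k(b, N), where 0 <= f_k(b, N) -> 0 as N -> oo.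
  Summing over a = 0, ..., M-1 and letting M -> oo, where the partial sums tend to 0, gives the
  value.
\<close>

section \<open>Newton's identity for \<open>Q\<close>\<close>

lemma Qidx_vanishes: "m \<in> Qidx n \<Longrightarrow> n < i \<Longrightarrow> m i = 0"
  by (auto simp: Qidx_def)

lemma Qidx_weight:
  assumes "m \<in> Qidx n" "n \<le> N"
  shows "(\<Sum>l=1..N. l * m l) = n"
proof -
  have "(\<Sum>l=1..N. l * m l) = (\<Sum>l=1..n. l * m l)"
    by (rule sum.mono_neutral_right) (use assms Qidx_vanishes in auto)
  also have "\<dots> = n"
    using assms(1) by (simp add: Qidx_def)
  finally show ?thesis .
qed

lemma Qidx_entry_le:
  assumes "m \<in> Qidx n" "i \<in> {1..n}"
  shows "i * m i \<le> n"
proof -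
  have "i * m i \<le> (\<Sum>l=1..n. l * m l)"
    by (rule member_le_sum) (use assms(2) in auto)
  with assms(1) show ?thesis
    by (simp add: Qidx_def)
qed

lemma finite_Qidx: "finite (Qidx n)"
proof (rule finite_subset)
  show "Qidx n \<subseteq> {m. \<forall>i. (i \<in> {1..n} \<longrightarrow> m i \<in> {0..n}) \<and> (i \<notin> {1..n} \<longrightarrow> m i = 0)}"
  proof safe
    fix m i assume "m \<in> Qidx n" "i \<in> {1..n}"
    then have "i * m i \<le> n" by (rule Qidx_entry_le)
    with \<open>i \<in> {1..n}\<close> show "m i \<in> {0..n}"
      using le_trans[of "m i" "i * m i" n] by auto
  qed (auto simp: Qidx_def)
qed (rule finite_set_of_finite_funs; simp)

lemma Q_0 [simp]: "Q 0 y = 1"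
proof -
  have "Qidx 0 = {\<lambda>_. 0}"
    by (auto simp: Qidx_def)
  then show ?thesis
    by (simp add: Q_def)
qed

lemma weighted_sum_fun_upd:
  fixes m :: "nat \<Rightarrow> nat"
  assumes "i \<in> {1..N}"
  shows "(\<Sum>l=1..N. l * (m(i := v)) l) + i * m i = (\<Sum>l=1..N. l * m l) + i * v"
proof -
  have "(\<Sum>l=1..N. l * (m(i := v)) l) = i * v + (\<Sum>l\<in>{1..N}-{i}. l * (m(i := v)) l)"
    using assms by (subst sum.remove[of _ i]) auto
  moreover have "(\<Sum>l=1..N. l * m l) = i * m i + (\<Sum>l\<in>{1..N}-{i}. l * m l)"
    using assms by (subst sum.remove[of _ i]) auto
  moreover have "(\<Sum>l\<in>{1..N}-{i}. l * (m(i := v)) l) = (\<Sum>l\<in>{1..N}-{i}. l * m l)"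
    by (rule sum.cong) auto
  ultimately show ?thesis
    by simp
qed

lemma Qidx_increment:
  assumes i: "i \<in> {1..n}" and m: "m \<in> Qidx (n - i)"
  shows "m(i := Suc (m i)) \<in> Qidx n"
proof -
  have "(\<Sum>l=1..n. l * m l) = n - i"
    using m by (rule Qidx_weight) simp
  then have "(\<Sum>l=1..n. l * (m(i := Suc (m i))) l) = n"
    using weighted_sum_fun_upd[OF i, of m "Suc (m i)"] i by simp
  moreover have "l \<in> {1..n}" if "(m(i := Suc (m i))) l \<noteq> 0" for l
  proof (cases "l = i")
    case False
    with that m have "l \<in> {1..n - i}"
      by (simp add: Qidx_def)
    then show ?thesis
      by auto
  qed (use i in simp)
  ultimately show ?thesis
    by (auto simp: Qidx_def)
qed

lemma Qidx_decrement:
  assumes i: "i \<in> {1..n}" and m: "m \<in> Qidx n" and mi: "0 < m i"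
  shows "m(i := m i - 1) \<in> Qidx (n - i)"
proof -
  define m' where "m' = m(i := m i - 1)"
  have "(\<Sum>l=1..n. l * m' l) + i * m i = n + i * (m i - 1)"
    unfolding m'_def using weighted_sum_fun_upd[OF i] Qidx_weight[OF m] by simp
  moreover have "i * m i = i * (m i - 1) + i"
    using mi by (cases "m i") auto
  ultimately have weight: "(\<Sum>l=1..n. l * m' l) = n - i"
    by simp
  have supp: "l \<in> {1..n - i}" if "m' l \<noteq> 0" for l
  proof -
    have "l \<in> {1..n}"
      using that m by (auto simp: Qidx_def m'_def split: if_splits)
    then have "l * m' l \<le> n - i"
      using weight member_le_sum[of l "{1..n}" "\<lambda>l. l * m' l"] by simp
    moreover have "l \<le> l * m' l"
      using that by simp
    ultimately have "l \<le> n - i"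
      by linarith
    with \<open>l \<in> {1..n}\<close> show ?thesis
      by simp
  qed
  have "(\<Sum>l=1..n - i. l * m' l) = (\<Sum>l=1..n. l * m' l)"
    by (rule sum.mono_neutral_left) (use supp in \<open>fastforce+\<close>)
  with weight have "(\<Sum>l=1..n - i. l * m' l) = n - i"
    by simp
  with supp show ?thesis
    unfolding Qidx_def m'_def[symmetric] by blast
qed

definition Q_monomial :: "nat \<Rightarrow> (nat \<Rightarrow> nat) \<Rightarrow> (nat \<Rightarrow> real) \<Rightarrow> real" where
  "Q_monomial n m y = (\<Prod>i=1..n. (y i / real i) ^ m i / fact (m i))"

lemma Q_monomial_mono_neutral:
  assumes "\<And>i. n < i \<Longrightarrow> m i = 0" "n \<le> N"
  shows "Q_monomial N m y = Q_monomial n m y"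
  unfolding Q_monomial_def by (rule prod.mono_neutral_right) (use assms in auto)

lemma Q_monomial_increment:
  assumes i: "i \<in> {1..n}"
  shows "real (i * Suc (m i)) * Q_monomial n (m(i := Suc (m i))) y = y i * Q_monomial n m y"
proof -
  let ?F = "\<lambda>m l. (y l / real l) ^ m l / fact (m l)"
  let ?m = "m(i := Suc (m i))"
  have split: "Q_monomial n m' y = ?F m' i * (\<Prod>l\<in>{1..n}-{i}. ?F m' l)" for m'
    unfolding Q_monomial_def using i by (intro prod.remove) auto
  have rest: "(\<Prod>l\<in>{1..n}-{i}. ?F ?m l) = (\<Prod>l\<in>{1..n}-{i}. ?F m l)"
    by (rule prod.cong) auto
  have "real (i * Suc r) * (x ^ Suc r / fact (Suc r)) = (real i * x) * (x ^ r / fact r)"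
    for r and x :: real
  proof -
    have "(fact r :: real) + fact r * real r > 0"
      by (simp add: add_pos_nonneg)
    then show ?thesis
      by (simp add: divide_simps algebra_simps)
  qed
  from this[of "m i" "y i / real i"] i
  have factor: "real (i * Suc (m i)) * ?F ?m i = y i * ?F m i"
    by simp
  show ?thesis
    unfolding split[of ?m] split[of m] rest by (simp only: mult.assoc[symmetric] factor)
qed

lemma sum_Qidx_weighted:
  assumes i: "i \<in> {1..n}"
  shows "(\<Sum>m\<in>Qidx n. real (i * m i) * Q_monomial n m y) = y i * Q (n - i) y"
proof -
  let ?S = "{m \<in> Qidx n. 0 < m i}"
  have "(\<Sum>m\<in>Qidx n. real (i * m i) * Q_monomial n m y) = (\<Sum>m\<in>?S. real (i * m i) * Q_monomial n m y)"
    by (rule sum.mono_neutral_right) (auto simp: finite_Qidx)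
  also have "\<dots> = (\<Sum>m\<in>Qidx (n - i). real (i * Suc (m i)) * Q_monomial n (m(i := Suc (m i))) y)"
    by (rule sum.reindex_bij_witness[where j = "\<lambda>m. m(i := m i - 1)" and i = "\<lambda>m. m(i := Suc (m i))"])
       (auto simp: Qidx_increment[OF i] Qidx_decrement[OF i, simplified])
  also have "\<dots> = (\<Sum>m\<in>Qidx (n - i). y i * Q_monomial (n - i) m y)"
  proof (rule sum.cong[OF refl])
    fix m assume "m \<in> Qidx (n - i)"
    then have "Q_monomial n m y = Q_monomial (n - i) m y"
      by (intro Q_monomial_mono_neutral) (auto simp: Qidx_vanishes)
    then show "real (i * Suc (m i)) * Q_monomial n (m(i := Suc (m i))) y = y i * Q_monomial (n - i) m y"
      using Q_monomial_increment[OF i] by simp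
  qed
  finally show ?thesis
    by (simp add: Q_def Q_monomial_def sum_distrib_left)
qed

lemma Q_Newton_identity: "real n * Q n y = (\<Sum>j<n. y (Suc j) * Q (n - Suc j) y)"
proof -
  have "real n * Q n y = (\<Sum>m\<in>Qidx n. real n * Q_monomial n m y)"
    by (simp add: Q_def Q_monomial_def sum_distrib_left)
  also have "\<dots> = (\<Sum>m\<in>Qidx n. \<Sum>i=1..n. real (i * m i) * Q_monomial n m y)"
  proof (rule sum.cong[OF refl])
    fix m assume "m \<in> Qidx n"
    then have "real n = (\<Sum>i=1..n. real (i * m i))"
      unfolding of_nat_sum[symmetric] by (simp add: Qidx_def)
    then show "real n * Q_monomial n m y = (\<Sum>i=1..n. real (i * m i) * Q_monomial n m y)"
      by (simp add: sum_distrib_right)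
  qed
  also have "\<dots> = (\<Sum>i=1..n. \<Sum>m\<in>Qidx n. real (i * m i) * Q_monomial n m y)"
    by (rule sum.swap)
  also have "\<dots> = (\<Sum>i=1..n. y i * Q (n - i) y)"
    by (rule sum.cong[OF refl]) (rule sum_Qidx_weighted)
  also have "\<dots> = (\<Sum>j<n. y (Suc j) * Q (n - Suc j) y)"
    by (rule sum.reindex_bij_witness[where i = Suc and j = "\<lambda>i. i - 1"]) auto
  finally show ?thesis .
qed

lemma Q_Suc_zero: "Q (Suc k) (\<lambda>_. 0) = 0"
  using Q_Newton_identity[of "Suc k" "\<lambda>_. 0"] by (simp del: of_nat_Suc)

text \<open>If y are the power sums of an alphabet z with x adjoined, this is
  h_{k+1}(z, x) - h_{k+1}(z) = x h_k(z, x).\<close>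

lemma Q_Suc_diff:
  fixes y z :: "nat \<Rightarrow> real"
  assumes yz: "\<And>j. y (Suc j) = z (Suc j) + x ^ Suc j"
  shows "Q (Suc k) y - Q (Suc k) z = x * Q k y"
proof (induction k rule: less_induct)
  case (less k)
  have D: "Q (k - j) y - Q (k - j) z = (if j = k then 0 else x * Q (k - Suc j) y)" if "j < Suc k" for j
  proof (cases "j = k")
    case False
    with that have "k - j = Suc (k - Suc j)" "k - Suc j < k"
      by auto
    with False less.IH show ?thesis
      by simp
  qed simp
  have "real (Suc k) * (Q (Suc k) y - Q (Suc k) z)
      = (\<Sum>j<Suc k. z (Suc j) * (Q (k - j) y - Q (k - j) z) + x ^ Suc j * Q (k - j) y)"
    using Q_Newton_identity[of "Suc k" y] Q_Newton_identity[of "Suc k" z]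
    by (simp add: yz algebra_simps sum.distrib sum_subtractf)
  also have "\<dots> = (\<Sum>j<Suc k. z (Suc j) * (if j = k then 0 else x * Q (k - Suc j) y))
      + (\<Sum>j<Suc k. x ^ Suc j * Q (k - j) y)"
    by (simp add: D sum.distrib)
  also have "\<dots> = x * (\<Sum>j<k. z (Suc j) * Q (k - Suc j) y)
      + (x * Q k y + x * (\<Sum>j<k. x ^ Suc j * Q (k - Suc j) y))"
  proof -
    have "(\<Sum>j<Suc k. z (Suc j) * (if j = k then 0 else x * Q (k - Suc j) y))
        = x * (\<Sum>j<k. z (Suc j) * Q (k - Suc j) y)"
      by (simp add: sum_distrib_left algebra_simps)
    moreover have "(\<Sum>j<Suc k. x ^ Suc j * Q (k - j) y)
        = x * Q k y + x * (\<Sum>j<k. x ^ Suc j * Q (k - Suc j) y)"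
      by (simp del: sum.lessThan_Suc add: sum.lessThan_Suc_shift sum_distrib_left algebra_simps)
    ultimately show ?thesis
      by simp
  qed
  also have "\<dots> = x * Q k y + x * (\<Sum>j<k. (z (Suc j) + x ^ Suc j) * Q (k - Suc j) y)"
    by (simp add: sum_distrib_left algebra_simps sum.distrib)
  also have "\<dots> = real (Suc k) * (x * Q k y)"
    using Q_Newton_identity[of k y] by (simp add: yz algebra_simps)
  finally show ?case
    by (subst (asm) mult_left_cancel) auto
qed

section \<open>Coefficient sequences of power series\<close>

text \<open>
  A sequence \<open>s :: nat \<Rightarrow> real\<close> is read as the coefficient sequence of a formal power
  series in \<open>x\<close>: \<open>times_X s\<close> multiplies it by \<open>x\<close> and \<open>div_lin b s\<close> divides it by \<open>b - x\<close>.
\<close>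

definition times_X :: "(nat \<Rightarrow> real) \<Rightarrow> nat \<Rightarrow> real" where
  "times_X s k = (case k of 0 \<Rightarrow> 0 | Suc j \<Rightarrow> s j)"

lemma times_X_0 [simp]: "times_X s 0 = 0"
  and times_X_Suc [simp]: "times_X s (Suc k) = s k"
  by (simp_all add: times_X_def)

lemma times_X_linear: "times_X (\<lambda>k. c * s k + t k) k = c * times_X s k + times_X t k"
  by (cases k) simp_all

fun div_lin :: "real \<Rightarrow> (nat \<Rightarrow> real) \<Rightarrow> nat \<Rightarrow> real" where
  "div_lin b s 0 = s 0 / b"
| "div_lin b s (Suc k) = (s (Suc k) + div_lin b s k) / b"

lemma div_lin_eq: "b \<noteq> 0 \<Longrightarrow> b * div_lin b s k = s k + times_X (div_lin b s) k"
  by (cases k) simp_all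

lemma div_lin_linear: "div_lin b (\<lambda>k. c * s k + d * t k) k = c * div_lin b s k + d * div_lin b t k"
  by (induction k) (simp_all add: add_divide_distrib algebra_simps)

lemma div_lin_cancel: "b \<noteq> 0 \<Longrightarrow> div_lin b (\<lambda>k. b * s k - times_X s k) k = s k"
  by (induction k) simp_all

lemma div_lin_diff_eq:
  assumes "b \<noteq> 0" "\<And>k. c * (s k - t k) = b * t k - times_X t k"
  shows "c * (div_lin b s k - div_lin b t k) = t k"
proof -
  have "c * (div_lin b s k - div_lin b t k) = div_lin b (\<lambda>k. c * s k + (- c) * t k) k"
    using div_lin_linear[of b c s "- c" t k] by (simp add: algebra_simps)
  also have "(\<lambda>k. c * s k + (- c) * t k) = (\<lambda>k. b * t k - times_X t k)"
    using assms(2) by (simp add: fun_eq_iff algebra_simps)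
  finally show ?thesis
    using div_lin_cancel[OF assms(1)] by simp
qed

lemma div_lin_nonneg: "0 < b \<Longrightarrow> (\<And>k. 0 \<le> s k) \<Longrightarrow> 0 \<le> div_lin b s k"
  by (induction k) simp_all

lemma tendsto_div_lin: "(\<And>k. (\<lambda>N. s N k) \<longlonglongrightarrow> 0) \<Longrightarrow> (\<lambda>N. div_lin b (s N) k) \<longlonglongrightarrow> 0"
  by (induction k) (auto intro!: tendsto_divide_zero tendsto_add_zero)

lemma div_lin_unit: "div_lin b (\<lambda>k. if k = 0 then 1 else 0) k = 1 / b ^ (k + 1)"
  by (induction k) simp_all

lemma div_lin_geometric: "b \<noteq> 0 \<Longrightarrow> div_lin b (\<lambda>k. 1 / b ^ (k + 1)) k = real (k + 1) / b ^ (k + 2)"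
  by (induction k) (simp_all add: field_simps)

section \<open>The coefficients c_k(a, n)\<close>

text \<open>
  \<open>hcoef a n\<close> is the coefficient sequence of prod_{t=1..n} t / (t + a - x), defined through
  (a + n - x) * P_n = n * P_{n-1}; see \<open>hcoef_Suc\<close>.
\<close>

fun hcoef :: "real \<Rightarrow> nat \<Rightarrow> nat \<Rightarrow> real" where
  "hcoef a 0 k = (if k = 0 then 1 else 0)"
| "hcoef a (Suc n) 0 = real (Suc n) * hcoef a n 0 / (a + real (Suc n))"
| "hcoef a (Suc n) (Suc k) = (real (Suc n) * hcoef a n (Suc k) + hcoef a (Suc n) k) / (a + real (Suc n))"

lemma hcoef_Suc:
  "0 \<le> a \<Longrightarrow> (a + real (Suc n)) * hcoef a (Suc n) k = real (Suc n) * hcoef a n k + times_X (hcoef a (Suc n)) k"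
  by (cases k) (simp_all add: add_nonneg_pos)

declare hcoef.simps(2,3) [simp del]

lemma hcoef_unique:
  assumes "0 \<le> a"
    and init: "\<And>k. d 0 k = (if k = 0 then 1 else 0)"
    and rec: "\<And>n k. (a + real (Suc n)) * d (Suc n) k = real (Suc n) * d n k + times_X (d (Suc n)) k"
  shows "d n k = hcoef a n k"
proof (induction n arbitrary: k)
  case 0
  then show ?case
    by (simp add: init)
next
  case (Suc n)
  note IH_n = Suc.IH
  have pos: "a + real (Suc n) \<noteq> 0"
    using assms(1) by linarith
  show ?case
  proof (induction k)
    case 0
    have "(a + real (Suc n)) * d (Suc n) 0 = (a + real (Suc n)) * hcoef a (Suc n) 0"
      using rec[of n 0] hcoef_Suc[OF assms(1), of n 0] IH_n by simp
    with pos show ?case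
      by simp
  next
    case (Suc k)
    have "(a + real (Suc n)) * d (Suc n) (Suc k) = (a + real (Suc n)) * hcoef a (Suc n) (Suc k)"
      using rec[of n "Suc k"] hcoef_Suc[OF assms(1), of n "Suc k"] IH_n Suc by simp
    with pos show ?case
      by simp
  qed
qed

lemma hcoef_nonneg: "0 \<le> a \<Longrightarrow> 0 \<le> hcoef a n k"
proof (induction n arbitrary: k)
  case (Suc n)
  then show ?case
    by (induction k) (simp_all add: hcoef.simps add_nonneg_pos)
qed simp

lemma hcoef_antimono: "0 \<le> a \<Longrightarrow> a \<le> a' \<Longrightarrow> hcoef a' n k \<le> hcoef a n k"
proof (induction n arbitrary: k)
  case (Suc n)
  note IH_n = Suc.IH[OF Suc.prems] and prems = Suc.prems
  show ?case
  proof (induction k)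
    case 0
    have "real (Suc n) * hcoef a' n 0 / (a' + real (Suc n)) \<le> real (Suc n) * hcoef a n 0 / (a' + real (Suc n))"
      using IH_n prems by (intro divide_right_mono mult_left_mono) auto
    also have "\<dots> \<le> real (Suc n) * hcoef a n 0 / (a + real (Suc n))"
      using prems hcoef_nonneg[of a n 0] by (intro divide_left_mono) auto
    finally show ?case
      by (simp add: hcoef.simps)
  next
    case (Suc k)
    have "(real (Suc n) * hcoef a' n (Suc k) + hcoef a' (Suc n) k) / (a' + real (Suc n))
        \<le> (real (Suc n) * hcoef a n (Suc k) + hcoef a (Suc n) k) / (a' + real (Suc n))"
      using Suc.IH IH_n prems by (intro divide_right_mono add_mono mult_left_mono) auto
    also have "\<dots> \<le> (real (Suc n) * hcoef a n (Suc k) + hcoef a (Suc n) k) / (a + real (Suc n))"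
      using prems hcoef_nonneg[of a] by (intro divide_left_mono add_nonneg_nonneg mult_nonneg_nonneg) auto
    finally show ?case
      by (simp add: hcoef.simps)
  qed
qed simp

lemma div_lin_hcoef_diff:
  assumes "0 < b"
  shows "real (Suc n) * (div_lin b (hcoef b n) k - div_lin b (hcoef b (Suc n)) k) = hcoef b (Suc n) k"
proof (rule div_lin_diff_eq)
  fix k
  show "real (Suc n) * (hcoef b n k - hcoef b (Suc n) k) = b * hcoef b (Suc n) k - times_X (hcoef b (Suc n)) k"
    using hcoef_Suc[of b n k] assms by (simp add: algebra_simps)
qed (use assms in simp)

abbreviation hcoef_div_sq :: "real \<Rightarrow> nat \<Rightarrow> nat \<Rightarrow> real" where
  "hcoef_div_sq b n \<equiv> div_lin b (div_lin b (hcoef b n))"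

lemma hcoef_div_sq_diff:
  assumes "0 < b"
  shows "real (Suc n) * (hcoef_div_sq b n k - hcoef_div_sq b (Suc n) k)
       = div_lin b (hcoef b (Suc n)) k"
proof (rule div_lin_diff_eq)
  fix k
  show "real (Suc n) * (div_lin b (hcoef b n) k - div_lin b (hcoef b (Suc n)) k)
      = b * div_lin b (hcoef b (Suc n)) k - times_X (div_lin b (hcoef b (Suc n))) k"
    using div_lin_hcoef_diff[OF assms] div_lin_eq[of b] assms by simp
qed (use assms in simp)

lemma hcoef_shift_param:
  assumes "0 \<le> a"
  shows "hcoef a n k = real n * div_lin (a + 1) (hcoef (a + 1) n) k + hcoef (a + 1) n k"
proof -
  let ?b = "a + 1"
  let ?c = "hcoef ?b" and ?e = "\<lambda>n. div_lin ?b (hcoef ?b n)"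
  have init: "real 0 * ?e 0 k + ?c 0 k = (if k = 0 then 1 else 0)" for k
    by simp
  have rec: "(a + real (Suc n)) * (real (Suc n) * ?e (Suc n) k + ?c (Suc n) k)
      = real (Suc n) * (real n * ?e n k + ?c n k) + times_X (\<lambda>k. real (Suc n) * ?e (Suc n) k + ?c (Suc n) k) k"
    for n k
  proof -
    let ?N = "real (Suc n)"
    have c: "(?b + ?N) * ?c (Suc n) k = ?N * ?c n k + times_X (?c (Suc n)) k"
      using hcoef_Suc[of ?b n k] assms by simp
    have e: "?b * ?e (Suc n) k = ?c (Suc n) k + times_X (?e (Suc n)) k"
      using div_lin_eq assms by simp
    have diff: "?N * (?e n k - ?e (Suc n) k) = ?c (Suc n) k"
      using div_lin_hcoef_diff assms by simp
    have N: "?N = real n + 1"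
      by simp
    show ?thesis
      unfolding times_X_linear using c e diff N by algebra
  qed
  from hcoef_unique[where d = "\<lambda>n k. real n * ?e n k + ?c n k", OF assms init rec] show ?thesis
    by simp
qed

lemma harm_Suc: "harm i (Suc n) = harm i n + (1 / real (Suc n)) ^ i"
  by (simp add: harm_def power_one_over)

lemma hcoef_0_eq_Q: "hcoef 0 n k = Q k (\<lambda>i. harm i n)"
proof -
  have init: "Q k (\<lambda>i. harm i 0) = (if k = 0 then 1 else 0)" for k
    by (cases k) (simp_all add: harm_def Q_Suc_zero)
  have rec: "(0 + real (Suc n)) * Q k (\<lambda>i. harm i (Suc n))
      = real (Suc n) * Q k (\<lambda>i. harm i n) + times_X (\<lambda>k. Q k (\<lambda>i. harm i (Suc n))) k" for n k
  proof (cases k)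
    case (Suc j)
    have "Q (Suc j) (\<lambda>i. harm i (Suc n)) - Q (Suc j) (\<lambda>i. harm i n) = 1 / real (Suc n) * Q j (\<lambda>i. harm i (Suc n))"
      by (rule Q_Suc_diff) (simp add: harm_Suc)
    with Suc show ?thesis
      by (simp add: field_simps)
  qed simp
  from hcoef_unique[where d = "\<lambda>n k. Q k (\<lambda>i. harm i n)", OF order_refl init rec] show ?thesis
    by simp
qed

lemma hcoef_0_1: "hcoef 0 (Suc 0) k = 1"
  by (induction k) (simp_all add: hcoef.simps)

lemma hcoef_0_split_term:
  "hcoef 0 n (Suc k) / real (Suc n) ^ 2
     = hcoef 0 (Suc n) (Suc k) / real (Suc n) ^ 2 - hcoef 0 (Suc n) k / real (Suc n) ^ 3"
proof -
  have "real (Suc n) * hcoef 0 (Suc n) (Suc k) = real (Suc n) * hcoef 0 n (Suc k) + hcoef 0 (Suc n) k"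
    using hcoef_Suc[of 0 n "Suc k"] by simp
  then show ?thesis
    by (simp add: field_simps power2_eq_square power3_eq_cube del: of_nat_Suc)
qed

section \<open>The series sum_n c_k(0, n) / n^2\<close>

lemma sums_zeta_real:
  assumes "2 \<le> s"
  shows "(\<lambda>n. 1 / real (Suc n) ^ s) sums zeta_real s"
proof -
  have "summable (\<lambda>n. 1 / real n ^ s)"
    using inverse_power_summable[OF assms, where 'a = real] by (simp add: divide_inverse)
  then have "summable (\<lambda>n. 1 / real (Suc n) ^ s)"
    by (rule summable_Suc_iff[THEN iffD2])
  then show ?thesis
    unfolding zeta_real_def by (rule summable_sums)
qed

lemma hcoef_div_sq_0:
  assumes "b \<noteq> 0"
  shows "hcoef_div_sq b 0 k = real (k + 1) / b ^ (k + 2)"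
proof -
  have unit: "hcoef b 0 = (\<lambda>k. if k = 0 then 1 else 0)"
    by (simp add: fun_eq_iff)
  have "div_lin b (hcoef b 0) = (\<lambda>k. 1 / b ^ (k + 1))"
    unfolding unit by (simp add: fun_eq_iff div_lin_unit)
  then show ?thesis
    by (simp only: div_lin_geometric[OF assms])
qed

definition hcoef_sum :: "nat \<Rightarrow> real \<Rightarrow> nat \<Rightarrow> real" where
  "hcoef_sum k a N = (\<Sum>n<N. hcoef a (Suc n) k / real (Suc n) ^ 2)"

lemma hcoef_sum_nonneg: "0 \<le> a \<Longrightarrow> 0 \<le> hcoef_sum k a N"
  unfolding hcoef_sum_def by (intro sum_nonneg divide_nonneg_nonneg hcoef_nonneg) auto

lemma hcoef_sum_param_diff:
  assumes "0 \<le> a"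
  shows "hcoef_sum k a N - hcoef_sum k (a + 1) N
       = hcoef_div_sq (a + 1) 0 k
         - hcoef_div_sq (a + 1) N k"
proof -
  let ?f = "\<lambda>n. hcoef_div_sq (a + 1) n k"
  have "hcoef a (Suc n) k / real (Suc n) ^ 2 - hcoef (a + 1) (Suc n) k / real (Suc n) ^ 2 = ?f n - ?f (Suc n)"
    (is "?term n = _") for n
  proof -
    have "hcoef a (Suc n) k - hcoef (a + 1) (Suc n) k = real (Suc n) * div_lin (a + 1) (hcoef (a + 1) (Suc n)) k"
      using hcoef_shift_param[OF assms] by simp
    also have "\<dots> = real (Suc n) ^ 2 * (?f n - ?f (Suc n))"
      using hcoef_div_sq_diff[of "a + 1" n k] assms by (simp add: power2_eq_square)
    finally show ?thesis
      by (simp add: diff_divide_distrib[symmetric] del: of_nat_Suc)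
  qed
  then have "(\<Sum>n<N. ?term n) = (\<Sum>n<N. ?f n - ?f (Suc n))"
    by (intro sum.cong refl)
  also have "\<dots> = ?f 0 - ?f N"
    by (rule sum_lessThan_telescope')
  finally show ?thesis
    unfolding hcoef_sum_def sum_subtractf .
qed

lemma hcoef_sum_decompose:
  "hcoef_sum k 0 N = (\<Sum>m<M. real (k + 1) / real (Suc m) ^ (k + 2)
      - hcoef_div_sq (real (Suc m)) N k)
    + hcoef_sum k (real M) N"
proof -
  have "hcoef_sum k 0 N - hcoef_sum k (real M) N = (\<Sum>m<M. hcoef_sum k (real m) N - hcoef_sum k (real (Suc m)) N)"
    using sum_lessThan_telescope'[of "\<lambda>m. hcoef_sum k (real m) N" M] by simp
  also have "\<dots> = (\<Sum>m<M. real (k + 1) / real (Suc m) ^ (k + 2)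
      - hcoef_div_sq (real (Suc m)) N k)"
  proof (rule sum.cong[OF refl])
    fix m
    have Suc_m: "real (Suc m) = real m + 1" and pos: "real m + 1 \<noteq> 0"
      by simp_all
    show "hcoef_sum k (real m) N - hcoef_sum k (real (Suc m)) N
        = real (k + 1) / real (Suc m) ^ (k + 2)
          - hcoef_div_sq (real (Suc m)) N k"
      unfolding Suc_m hcoef_sum_param_diff[of "real m" k N, simplified] hcoef_div_sq_0[OF pos] ..
  qed
  finally show ?thesis
    by simp
qed

lemma hcoef_div_sq_nonneg: "0 < b \<Longrightarrow> 0 \<le> hcoef_div_sq b n k"
  by (intro div_lin_nonneg hcoef_nonneg) auto

lemma tendsto_hcoef_param: "(\<lambda>M. hcoef (real M) (Suc n) k) \<longlonglongrightarrow> 0"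
proof -
  define K where "K = real (Suc n) * hcoef 0 n k + times_X (hcoef 0 (Suc n)) k"
  have bound: "hcoef (real M) (Suc n) k \<le> K / real (Suc M)" for M
  proof -
    have "real (Suc M) * hcoef (real M) (Suc n) k \<le> (real M + real (Suc n)) * hcoef (real M) (Suc n) k"
      by (intro mult_right_mono hcoef_nonneg) auto
    also have "\<dots> = real (Suc n) * hcoef (real M) n k + times_X (hcoef (real M) (Suc n)) k"
      by (rule hcoef_Suc) simp
    also have "\<dots> \<le> K"
      unfolding K_def by (cases k) (auto intro!: add_mono mult_left_mono hcoef_antimono)
    finally show ?thesis
      by (simp add: field_simps)
  qed
  show ?thesis
  proof (rule real_tendsto_sandwich[where f = "\<lambda>_. 0" and h = "\<lambda>M. K / real (Suc M)"])
    show "\<forall>\<^sub>F M in sequentially. hcoef (real M) (Suc n) k \<le> K / real (Suc M)"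
      using bound by (intro always_eventually allI)
    show "(\<lambda>M. K / real (Suc M)) \<longlonglongrightarrow> 0"
      using LIMSEQ_Suc[OF lim_const_over_n[of K]] by simp
  qed (auto simp: hcoef_nonneg)
qed

lemma tendsto_hcoef_sum_param: "(\<lambda>M. hcoef_sum k (real M) N) \<longlonglongrightarrow> 0"
  unfolding hcoef_sum_def by (intro tendsto_null_sum tendsto_divide_zero tendsto_hcoef_param)

lemma sums_weighted_zeta_real:
  "(\<lambda>m. real (k + 1) / real (Suc m) ^ (k + 2)) sums (real (k + 1) * zeta_real (k + 2))"
  using sums_mult[OF sums_zeta_real[of "k + 2"], of "real (k + 1)"] by simp

lemma hcoef_sum_le_zeta_real: "hcoef_sum k 0 N \<le> real (k + 1) * zeta_real (k + 2)"
proof -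
  let ?w = "\<lambda>m. real (k + 1) / real (Suc m) ^ (k + 2)"
  have "hcoef_sum k 0 N \<le> real (k + 1) * zeta_real (k + 2) + hcoef_sum k (real M) N" for M
  proof -
    have "(\<Sum>m<M. ?w m - hcoef_div_sq (real (Suc m)) N k)
        \<le> (\<Sum>m<M. ?w m)"
      by (intro sum_mono) (simp add: hcoef_div_sq_nonneg)
    also have "\<dots> \<le> suminf ?w"
      using sums_weighted_zeta_real[of k] by (intro sum_le_suminf) (auto simp: sums_iff)
    also have "\<dots> = real (k + 1) * zeta_real (k + 2)"
      using sums_weighted_zeta_real[of k] by (simp add: sums_iff)
    finally show ?thesis
      using hcoef_sum_decompose[of k N M] by linarith
  qed
  moreover have "(\<lambda>M. real (k + 1) * zeta_real (k + 2) + hcoef_sum k (real M) N)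
      \<longlonglongrightarrow> real (k + 1) * zeta_real (k + 2) + 0"
    by (intro tendsto_add tendsto_const tendsto_hcoef_sum_param)
  ultimately show ?thesis
    using LIMSEQ_le_const[of _ _ "hcoef_sum k 0 N"] by auto
qed

lemma summable_hcoef_0: "summable (\<lambda>n. hcoef 0 (Suc n) k / real (Suc n) ^ 2)"
  by (rule summableI_nonneg_bounded[where x = "real (k + 1) * zeta_real (k + 2)"])
     (use hcoef_sum_le_zeta_real in \<open>auto simp: hcoef_sum_def hcoef_nonneg\<close>)

lemma mono_hcoef_0: "mono (\<lambda>n. hcoef 0 n k)"
proof (rule incseq_SucI)
  fix n
  have "real (Suc n) * hcoef 0 (Suc n) k = real (Suc n) * hcoef 0 n k + times_X (hcoef 0 (Suc n)) k"
    using hcoef_Suc[of 0 n k] by simp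
  moreover have "0 \<le> times_X (hcoef 0 (Suc n)) k"
    by (cases k) (simp_all add: hcoef_nonneg)
  ultimately have "real (Suc n) * hcoef 0 n k \<le> real (Suc n) * hcoef 0 (Suc n) k"
    by linarith
  then show "hcoef 0 n k \<le> hcoef 0 (Suc n) k"
    by (rule mult_left_le_imp_le) simp
qed

lemma tendsto_div_nat_of_mono_summable:
  fixes u :: "nat \<Rightarrow> real"
  assumes mono: "mono u" and nonneg: "\<And>n. 0 \<le> u n"
    and summable: "summable (\<lambda>n. u (Suc n) / real (Suc n) ^ 2)"
  shows "(\<lambda>N. u N / real N) \<longlonglongrightarrow> 0"
proof -
  define g where "g n = u (Suc n) / real (Suc n) ^ 2" for n
  define S where "S N = (\<Sum>n<N. g n)" for N
  have "S \<longlonglongrightarrow> suminf g"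
    unfolding S_def g_def using summable by (rule summable_LIMSEQ)
  moreover from this have "(\<lambda>N. S (2 * N)) \<longlonglongrightarrow> suminf g"
    using LIMSEQ_subseq_LIMSEQ[of S _ "\<lambda>N. 2 * N"] by (simp add: strict_mono_def o_def)
  ultimately have "(\<lambda>N. 4 * (S (2 * N) - S N)) \<longlonglongrightarrow> 4 * (suminf g - suminf g)"
    by (intro tendsto_intros)
  then have lim: "(\<lambda>N. 4 * (S (2 * N) - S N)) \<longlonglongrightarrow> 0"
    by simp
  have bound: "u N / real N \<le> 4 * (S (2 * N) - S N)" if "1 \<le> N" for N
  proof -
    have "u N / (4 * real N ^ 2) \<le> g n" if "n \<in> {N..<2 * N}" for n
    proof -
      have "real (Suc n) ^ 2 \<le> (2 * real N) ^ 2"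
        using that by (intro power_mono) auto
      then have "real (Suc n) ^ 2 \<le> 4 * real N ^ 2"
        by (simp add: power_mult_distrib)
      moreover have "u N \<le> u (Suc n)"
        using that by (intro monoD[OF mono]) simp
      ultimately show ?thesis
        unfolding g_def using nonneg[of N] by (intro frac_le) auto
    qed
    then have "real N * (u N / (4 * real N ^ 2)) \<le> (\<Sum>n\<in>{N..<2 * N}. g n)"
      using sum_bounded_below[of "{N..<2 * N}" "u N / (4 * real N ^ 2)" g] by simp
    also have "\<dots> = S (2 * N) - S N"
      unfolding S_def lessThan_atLeast0 using sum_diff_nat_ivl[of 0 N "2 * N" g] by simp
    finally show ?thesis
      using that by (simp add: power2_eq_square field_simps)
  qed
  show ?thesis
  proof (rule real_tendsto_sandwich[where f = "\<lambda>_. 0" and h = "\<lambda>N. 4 * (S (2 * N) - S N)"])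
    show "\<forall>\<^sub>F N in sequentially. u N / real N \<le> 4 * (S (2 * N) - S N)"
      using bound by (intro eventually_sequentiallyI[of 1])
  qed (use lim nonneg in auto)
qed

lemma nat_mult_hcoef_le_hcoef_0:
  assumes "1 \<le> b"
  shows "real N * hcoef b N k \<le> hcoef 0 N k"
proof -
  have "hcoef b N k \<le> hcoef 1 N k"
    using assms by (rule hcoef_antimono[rotated]) simp
  also have "\<dots> \<le> div_lin 1 (hcoef 1 N) k"
    using div_lin_eq[of 1 "hcoef 1 N" k] div_lin_nonneg[of 1 "hcoef 1 N"]
    by (cases k) (auto simp: hcoef_nonneg)
  finally have "real N * hcoef b N k \<le> real N * div_lin 1 (hcoef 1 N) k + hcoef 1 N k"
    by (intro add_increasing2 hcoef_nonneg mult_left_mono) auto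
  also have "\<dots> = hcoef 0 N k"
    using hcoef_shift_param[of 0 N k] by simp
  finally show ?thesis .
qed

lemma tendsto_hcoef: "1 \<le> b \<Longrightarrow> (\<lambda>N. hcoef b N k) \<longlonglongrightarrow> 0"
proof (rule real_tendsto_sandwich[where f = "\<lambda>_. 0" and h = "\<lambda>N. hcoef 0 N k / real N"])
  show "(\<lambda>N. hcoef 0 N k / real N) \<longlonglongrightarrow> 0"
    using mono_hcoef_0 hcoef_nonneg summable_hcoef_0
    by (rule tendsto_div_nat_of_mono_summable) simp
  show "\<forall>\<^sub>F N in sequentially. hcoef b N k \<le> hcoef 0 N k / real N" if "1 \<le> b"
    using nat_mult_hcoef_le_hcoef_0[OF that]
    by (intro eventually_sequentiallyI[of 1]) (simp add: field_simps)
qed (auto simp: hcoef_nonneg)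

lemma suminf_hcoef_0: "(\<Sum>n. hcoef 0 (Suc n) k / real (Suc n) ^ 2) = real (k + 1) * zeta_real (k + 2)"
proof (rule antisym)
  show "(\<Sum>n. hcoef 0 (Suc n) k / real (Suc n) ^ 2) \<le> real (k + 1) * zeta_real (k + 2)"
    using summable_hcoef_0 hcoef_sum_le_zeta_real by (intro suminf_le_const) (auto simp: hcoef_sum_def)
  have partial: "(\<Sum>m<M. real (k + 1) / real (Suc m) ^ (k + 2)) \<le> (\<Sum>n. hcoef 0 (Suc n) k / real (Suc n) ^ 2)"
    for M
  proof (rule LIMSEQ_le)
    have "(\<lambda>N. \<Sum>m<M. real (k + 1) / real (Suc m) ^ (k + 2)
        - hcoef_div_sq (real (Suc m)) N k)
      \<longlonglongrightarrow> (\<Sum>m<M. real (k + 1) / real (Suc m) ^ (k + 2) - 0)"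
      by (intro tendsto_sum tendsto_diff tendsto_const tendsto_div_lin tendsto_hcoef) simp
    then show "(\<lambda>N. \<Sum>m<M. real (k + 1) / real (Suc m) ^ (k + 2)
        - hcoef_div_sq (real (Suc m)) N k)
      \<longlonglongrightarrow> (\<Sum>m<M. real (k + 1) / real (Suc m) ^ (k + 2))"
      by simp
    show "(\<lambda>N. hcoef_sum k 0 N) \<longlonglongrightarrow> (\<Sum>n. hcoef 0 (Suc n) k / real (Suc n) ^ 2)"
      unfolding hcoef_sum_def using summable_hcoef_0 by (rule summable_LIMSEQ)
    show "\<exists>N0. \<forall>N\<ge>N0. (\<Sum>m<M. real (k + 1) / real (Suc m) ^ (k + 2)
        - hcoef_div_sq (real (Suc m)) N k) \<le> hcoef_sum k 0 N"
      using hcoef_sum_decompose[of k _ M] hcoef_sum_nonneg[of "real M" k] by auto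
  qed
  show "real (k + 1) * zeta_real (k + 2) \<le> (\<Sum>n. hcoef 0 (Suc n) k / real (Suc n) ^ 2)"
    by (rule LIMSEQ_le_const2[OF sums_weighted_zeta_real[of k, unfolded sums_def]]) (use partial in blast)
qed

lemma summable_hcoef_0_cube: "summable (\<lambda>n. hcoef 0 (Suc n) k / real (Suc n) ^ 3)"
proof (rule summable_comparison_test'[OF summable_hcoef_0])
  fix n
  have "real (Suc n) ^ 2 \<le> real (Suc n) ^ 3"
    by (rule power_increasing) auto
  then show "norm (hcoef 0 (Suc n) k / real (Suc n) ^ 3) \<le> hcoef 0 (Suc n) k / real (Suc n) ^ 2"
    by (simp add: hcoef_nonneg frac_le)
qed

theorem mainTheorem17:
  fixes k :: nat
  assumes "k \<ge> 1"
  shows "summable (\<lambda>n. Q (k+1) (\<lambda>i. harm i (Suc n)) / (real (Suc n) + 1) ^ 2)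
       \<and> summable (\<lambda>n. Q k (\<lambda>i. harm i (Suc n)) / (real (Suc n)) ^ 3)
       \<and> (\<Sum>n. Q (k+1) (\<lambda>i. harm i (Suc n)) / (real (Suc n) + 1) ^ 2)
         + (\<Sum>n. Q k (\<lambda>i. harm i (Suc n)) / (real (Suc n)) ^ 3)
         = real (k + 2) * zeta_real (k + 3)"
proof -
  define g where "g n = hcoef 0 (Suc n) (Suc k) / real (Suc n) ^ 2" for n
  define u where "u n = hcoef 0 (Suc n) k / real (Suc n) ^ 3" for n
  have g: "summable g"
    unfolding g_def by (rule summable_hcoef_0)
  have u: "summable u"
    unfolding u_def by (rule summable_hcoef_0_cube)
  have g_sum: "suminf g = real (k + 2) * zeta_real (k + 3)"
    unfolding g_def using suminf_hcoef_0[of "Suc k"] by (simp add: eval_nat_numeral)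
  have "Q (k + 1) (\<lambda>i. harm i (Suc n)) / (real (Suc n) + 1) ^ 2 = g (Suc n) - u (Suc n)"
    and "Q k (\<lambda>i. harm i (Suc n)) / real (Suc n) ^ 3 = u n" for n
    using hcoef_0_split_term[of "Suc n" k] by (simp_all add: g_def u_def hcoef_0_eq_Q)
  moreover have "g 0 = u 0"
    by (simp add: g_def u_def hcoef_0_1)
  ultimately show ?thesis
    using g u g_sum suminf_diff[of "\<lambda>n. g (Suc n)" "\<lambda>n. u (Suc n)"] suminf_split_head[OF g] suminf_split_head[OF u]
    by (simp add: summable_diff summable_Suc_iff)
qed

end
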